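(* Let $n\ge1$ and let $A_1,\ldots,A_n$ be operators on $\mathbb{C}^{2^n}$ such that $A_x^\dagger=A_x$ and $A_xA_y+A_yA_x=2\delta_{xy}\mathbb{1}$ for all $x,y$. Consider the dichotomic steering functional $F^{dicho}=\{A_x: x=1,\ldots,n\}$, acting on an $(n,2,2^n)$-assemblage $\sigma$ by $\langle F^{dicho},\sigma\rangle=\mathrm{Tr}\big(\sum_{x=1}^n A_x(\sigma_x^1-\sigma_x^2)\big)$. Then $$V(F^{dicho})=\frac{\sup\{|\langle F^{dicho},\sigma\rangle|:\sigma\in\mathcal{Q}\}}{\sup\{|\langle F^{dicho},\sigma\rangle|:\sigma\in\mathcal{L}\}}\ \ge\ \sqrt{\tfrac{n}{2}}.$$
   Context: Here $d=2^n$. An $(n,2,d)$-assemblage is a family $\sigma=\{\sigma_x^a: x=1,\ldots,n,\ a=1,2\}$ of positive semidefinite operators on $\mathbb{C}^d$ such that $\sigma_x^1+\sigma_x^2$ does not depend on $x$ and has trace $1$; $\mathcal{Q}$ is the set of all such assemblages. An assemblage has a local hidden state (LHS) model if there exist a finite index set $\Lambda$, weights $q_\lambda\ge0$ with $\sum_\lambda q_\lambda=1$, density matrices $\sigma_\lambda$ on $\mathbb{C}^d$, and probability distributions $\{p_\lambda(a|x)\}_{a=1,2}$ for each $x,\lambda$, such that $\sigma_x^a=\sum_\lambda q_\lambda p_\lambda(a|x)\sigma_\lambda$ for all $x,a$; $\mathcal{L}$ is the set of such assemblages. *)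

theory Defs
  imports Complex_Main "Jordan_Normal_Form.Schur_Decomposition"
begin

definition mtrace :: "complex mat \<Rightarrow> complex" where
  "mtrace A = (\<Sum>i<dim_row A. A $$ (i, i))"

definition msum :: "nat \<Rightarrow> ('i \<Rightarrow> complex mat) \<Rightarrow> 'i set \<Rightarrow> complex mat" where
  "msum d f S = mat d d (\<lambda>(i, j). \<Sum>l\<in>S. f l $$ (i, j))"

definition hermitian_mat :: "nat \<Rightarrow> complex mat \<Rightarrow> bool" where
  "hermitian_mat d A \<longleftrightarrow> A \<in> carrier_mat d d \<and> mat_adjoint A = A"

definition psd_mat :: "nat \<Rightarrow> complex mat \<Rightarrow> bool" where
  "psd_mat d A \<longleftrightarrow> hermitian_mat d A \<and>
     (\<forall>v \<in> carrier_vec d. Im ((A *\<^sub>v v) \<bullet>c v) = 0 \<and> 0 \<le> Re ((A *\<^sub>v v) \<bullet>c v))"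

definition density_mat :: "nat \<Rightarrow> complex mat \<Rightarrow> bool" where
  "density_mat d \<rho> \<longleftrightarrow> psd_mat d \<rho> \<and> mtrace \<rho> = 1"

definition assemblage :: "nat \<Rightarrow> nat \<Rightarrow> (nat \<Rightarrow> nat \<Rightarrow> complex mat) \<Rightarrow> bool" where
  "assemblage n d sig \<longleftrightarrow>
     (\<forall>x\<in>{1..n}. \<forall>a\<in>{1,2::nat}. psd_mat d (sig x a)) \<and>
     (\<forall>x\<in>{1..n}. \<forall>y\<in>{1..n}. sig x 1 + sig x 2 = sig y 1 + sig y 2) \<and>
     (\<forall>x\<in>{1..n}. mtrace (sig x 1 + sig x 2) = 1)"

definition assemblages_Q :: "nat \<Rightarrow> nat \<Rightarrow> (nat \<Rightarrow> nat \<Rightarrow> complex mat) set" where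
  "assemblages_Q n d = {sig. assemblage n d sig}"

definition assemblages_L :: "nat \<Rightarrow> nat \<Rightarrow> (nat \<Rightarrow> nat \<Rightarrow> complex mat) set" where
  "assemblages_L n d = {sig. assemblage n d sig \<and>
     (\<exists>(\<Lambda>::nat set) (q::nat \<Rightarrow> real) (\<rho>::nat \<Rightarrow> complex mat) (p::nat \<Rightarrow> nat \<Rightarrow> nat \<Rightarrow> real).
        finite \<Lambda> \<and> (\<forall>l\<in>\<Lambda>. 0 \<le> q l) \<and> (\<Sum>l\<in>\<Lambda>. q l) = 1 \<and>
        (\<forall>l\<in>\<Lambda>. density_mat d (\<rho> l)) \<and>
        (\<forall>l\<in>\<Lambda>. \<forall>x\<in>{1..n}. (\<forall>a\<in>{1,2::nat}. 0 \<le> p l a x) \<and> p l 1 x + p l 2 x = 1) \<and>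
        (\<forall>x\<in>{1..n}. \<forall>a\<in>{1,2::nat}.
           sig x a = msum d (\<lambda>l. complex_of_real (q l * p l a x) \<cdot>\<^sub>m \<rho> l) \<Lambda>))}"

definition dicho_pairing :: "nat \<Rightarrow> (nat \<Rightarrow> complex mat) \<Rightarrow> (nat \<Rightarrow> nat \<Rightarrow> complex mat) \<Rightarrow> complex" where
  "dicho_pairing n A sig = mtrace (msum (2^n)
      (\<lambda>x. A x * (sig x 1 - sig x 2)) {1..n})"

definition violation_dicho :: "nat \<Rightarrow> (nat \<Rightarrow> complex mat) \<Rightarrow> real" where
  "violation_dicho n A =
     (SUP sig \<in> assemblages_Q n (2^n). cmod (dicho_pairing n A sig)) /
     (SUP sig \<in> assemblages_L n (2^n). cmod (dicho_pairing n A sig))"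

end

theory Submission
  imports Defs
begin

text \<open>Each A x is a Hermitian involution, and for such B and S \<ge> 0 one has
  |tr(B S)| \<le> tr S, because 1 \<plusminus> B = (1 \<plusminus> B)^2 / 2 is positive. Hence every term of the pairing
  is at most 1 in modulus on a quantum assemblage, and the assemblage (1 \<plusminus> A x) / 2d attains n.
  On a local hidden state model the pairing is an average over hidden states \<rho> of
  \<Sum>x \<plusminus>tr(A x \<rho>). For real c with \<Sum>x c x^2 = 1, anticommutation makes \<Sum>x c x A x again a
  Hermitian involution, so choosing c x = sign(tr(A x \<rho>)) / sqrt n bounds this sum by sqrt n.
  The violation is therefore at least n / sqrt n = sqrt n.\<close>

definition quad_form :: "nat \<Rightarrow> complex mat \<Rightarrow> complex vec \<Rightarrow> complex" where
  "quad_form d M v = (\<Sum>j<d. \<Sum>k<d. cnj (v$j) * M$$(j,k) * v$k)"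

definition trace_mult :: "nat \<Rightarrow> complex mat \<Rightarrow> complex mat \<Rightarrow> complex" where
  "trace_mult d M X = (\<Sum>i<d. \<Sum>k<d. M$$(i,k) * X$$(k,i))"

lemma cscalar_prod_mult_mat_vec:
  assumes "M \<in> carrier_mat d d" "v \<in> carrier_vec d"
  shows "(M *\<^sub>v v) \<bullet>c v = quad_form d M v"
proof -
  have "(M *\<^sub>v v) \<bullet>c v = (\<Sum>j<d. (\<Sum>k<d. M$$(j,k) * v$k) * cnj (v$j))"
    using assms by (auto simp: scalar_prod_def row_def atLeast0LessThan intro!: sum.cong)
  also have "\<dots> = quad_form d M v" unfolding quad_form_def
    by (auto simp: sum_distrib_right intro!: sum.cong)
  finally show ?thesis .
qed

lemma hermitian_mat_iff_entries:
  "hermitian_mat d M \<longleftrightarrow> M \<in> carrier_mat d d \<and> (\<forall>i<d. \<forall>j<d. cnj (M$$(j,i)) = M$$(i,j))"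
proof (cases "M \<in> carrier_mat d d")
  case True
  have index: "mat_adjoint M $$ (i,j) = cnj (M$$(j,i))" if "i<d" "j<d" for i j
    using True that unfolding mat_adjoint_def by (simp add: mat_of_rows_index cols_def)
  have "mat_adjoint M \<in> carrier_mat d d"
    using True unfolding mat_adjoint_def by (auto simp: mat_of_rows_def)
  then have "mat_adjoint M = M \<longleftrightarrow> (\<forall>i<d. \<forall>j<d. cnj (M$$(j,i)) = M$$(i,j))"
    using True index by (metis (no_types, lifting) carrier_matD eq_matI)
  then show ?thesis using True by (simp add: hermitian_mat_def)
qed (simp add: hermitian_mat_def)

lemma psd_mat_iff_quad_form:
  "psd_mat d M \<longleftrightarrow> hermitian_mat d M \<and>
     (\<forall>v\<in>carrier_vec d. Im (quad_form d M v) = 0 \<and> 0 \<le> Re (quad_form d M v))"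
  unfolding psd_mat_def by (auto simp: hermitian_mat_def cscalar_prod_mult_mat_vec)

definition involution_mat :: "nat \<Rightarrow> complex mat \<Rightarrow> bool" where
  "involution_mat d B \<longleftrightarrow> hermitian_mat d B \<and> B * B = 1\<^sub>m d"

lemma involution_mat_iff_entries:
  "involution_mat d B \<longleftrightarrow> B \<in> carrier_mat d d \<and> (\<forall>i<d. \<forall>j<d. cnj (B$$(j,i)) = B$$(i,j)) \<and>
     (\<forall>i<d. \<forall>k<d. (\<Sum>m<d. B$$(i,m) * B$$(m,k)) = (if i = k then 1 else 0))"
proof (cases "B \<in> carrier_mat d d")
  case True
  have entries: "(B * B) $$ (i,k) = (\<Sum>m<d. B$$(i,m) * B$$(m,k))" if "i < d" "k < d" for i k
    using True that by (simp add: scalar_prod_def atLeast0LessThan)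
  have "B * B = 1\<^sub>m d \<longleftrightarrow> (\<forall>i<d. \<forall>k<d. (B * B) $$ (i,k) = 1\<^sub>m d $$ (i,k))"
    using True by (auto simp del: index_mult_mat(1))
  then show ?thesis
    by (simp add: involution_mat_def hermitian_mat_iff_entries entries)
qed (simp add: involution_mat_def hermitian_mat_def)

lemma sum_triple_swap:
  "(\<Sum>i\<in>A. \<Sum>j\<in>B. \<Sum>k\<in>C. f i j k) = (\<Sum>j\<in>B. \<Sum>k\<in>C. \<Sum>i\<in>A. f i j k)"
  by (subst sum.swap) (simp add: sum.swap[of _ A C])

lemma one_minus_involution_square_entry:
  fixes B :: "complex mat" and s :: complex
  assumes "involution_mat d B" and "s * s = 1" and "j < d" "k < d"
  shows "(\<Sum>i<d. ((if i = j then 1 else 0) - s * B$$(i,j)) * ((if k = i then 1 else 0) - s * B$$(k,i)))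
     = 2 * (if k = j then 1 else 0) - 2 * s * B$$(k,j)"
proof -
  have expand: "((if i = j then 1 else 0) - s * B$$(i,j)) * ((if k = i then 1 else 0) - s * B$$(k,i))
     = (if i = j then (if k = i then 1 else 0) else 0) - (if i = j then s * B$$(k,i) else 0)
       - (if k = i then s * B$$(i,j) else 0) + (s * s) * (B$$(k,i) * B$$(i,j))" for i
    by (auto simp: algebra_simps)
  show ?thesis
    using assms unfolding expand
    by (simp add: involution_mat_iff_entries sum.distrib sum_subtractf sum.delta sum.delta')
qed

text \<open>Summing the quadratic forms of S at the columns of 1 - sB gives
  tr((1 - sB) S (1 - sB)) = 2 tr((1 - sB) S), since (1 - sB)^2 = 2(1 - sB).\<close>
lemma mtrace_minus_trace_mult_nonneg:
  assumes S: "psd_mat d S" and B: "involution_mat d B"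
    and s: "s * s = 1" "Im s = 0"
  shows "Im (mtrace S - s * trace_mult d B S) = 0 \<and> 0 \<le> Re (mtrace S - s * trace_mult d B S)"
proof -
  have S_car: "S \<in> carrier_mat d d"
    and S_quad: "\<forall>v\<in>carrier_vec d. Im (quad_form d S v) = 0 \<and> 0 \<le> Re (quad_form d S v)"
    using S by (auto simp: psd_mat_iff_quad_form hermitian_mat_def)
  have B_herm: "\<forall>i<d. \<forall>k<d. cnj (B$$(k,i)) = B$$(i,k)"
    using B by (simp add: involution_mat_iff_entries)
  have cnj_s: "cnj s = s" using s by (simp add: complex_eq_iff)
  define v where "v i = vec d (\<lambda>j. (if j = i then 1 else 0) - s * B$$(j,i))" for i
  have quad_v: "quad_form d S (v i) = (\<Sum>j<d. \<Sum>k<d. ((if i = j then 1 else 0) - s * B$$(i,j))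
      * S$$(j,k) * ((if k = i then 1 else 0) - s * B$$(k,i)))" if "i < d" for i
    unfolding quad_form_def v_def using that B_herm cnj_s by (auto intro!: sum.cong)
  have "(\<Sum>i<d. quad_form d S (v i)) = (\<Sum>j<d. \<Sum>k<d. S$$(j,k) *
      (\<Sum>i<d. ((if i = j then 1 else 0) - s * B$$(i,j)) * ((if k = i then 1 else 0) - s * B$$(k,i))))"
    unfolding sum_distrib_left
    by (simp add: quad_v, subst sum_triple_swap) (auto simp: algebra_simps intro!: sum.cong)
  also have "\<dots> = (\<Sum>j<d. \<Sum>k<d. S$$(j,k) * (2 * (if k = j then 1 else 0) - 2 * s * B$$(k,j)))"
    using B s(1) by (simp add: one_minus_involution_square_entry)
  also have "\<dots> = 2 * (mtrace S - s * trace_mult d B S)"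
  proof -
    have entry: "S$$(j,k) * (2 * (if k = j then 1 else 0) - 2 * s * B$$(k,j))
      = 2 * (if j = k then S$$(j,j) else 0) - 2 * s * (B$$(k,j) * S$$(j,k))" for j k
      by (auto simp: algebra_simps)
    have swap: "trace_mult d B S = (\<Sum>j<d. \<Sum>k<d. B$$(k,j) * S$$(j,k))"
      unfolding trace_mult_def by (rule sum.swap)
    show ?thesis
      using S_car unfolding mtrace_def entry swap
      by (simp add: sum_subtractf sum_distrib_left[symmetric] right_diff_distrib)
  qed
  finally have "(\<Sum>i<d. quad_form d S (v i)) = 2 * (mtrace S - s * trace_mult d B S)" .
  moreover have "Im (\<Sum>i<d. quad_form d S (v i)) = 0" "0 \<le> Re (\<Sum>i<d. quad_form d S (v i))"
    using S_quad by (auto simp: v_def intro!: sum_nonneg sum.neutral)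
  ultimately show ?thesis by simp
qed

lemma trace_mult_involution_le_mtrace:
  assumes "psd_mat d S" and "involution_mat d B"
  shows "Im (trace_mult d B S) = 0" "Im (mtrace S) = 0" "cmod (trace_mult d B S) \<le> Re (mtrace S)"
proof -
  have minus: "Im (mtrace S - trace_mult d B S) = 0 \<and> 0 \<le> Re (mtrace S - trace_mult d B S)"
    and plus: "Im (mtrace S + trace_mult d B S) = 0 \<and> 0 \<le> Re (mtrace S + trace_mult d B S)"
    using mtrace_minus_trace_mult_nonneg[OF assms, of 1] mtrace_minus_trace_mult_nonneg[OF assms, of "-1"]
    by simp_all
  then show "Im (trace_mult d B S) = 0" "Im (mtrace S) = 0" by auto
  then have "cmod (trace_mult d B S) = \<bar>Re (trace_mult d B S)\<bar>" by (simp add: cmod_def)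
  then show "cmod (trace_mult d B S) \<le> Re (mtrace S)" using plus minus by auto
qed

definition clifford_family :: "nat \<Rightarrow> 'i set \<Rightarrow> ('i \<Rightarrow> complex mat) \<Rightarrow> bool" where
  "clifford_family d S A \<longleftrightarrow> (\<forall>x\<in>S. hermitian_mat d (A x)) \<and>
     (\<forall>x\<in>S. \<forall>y\<in>S. A x * A y + A y * A x = (if x = y then 2 else 0) \<cdot>\<^sub>m 1\<^sub>m d)"

lemma clifford_family_anticommutator_entry:
  assumes A: "clifford_family d S A" and xy: "x \<in> S" "y \<in> S" and ik: "i < d" "k < d"
  shows "(\<Sum>m<d. A x$$(i,m) * A y$$(m,k)) + (\<Sum>m<d. A y$$(i,m) * A x$$(m,k))
    = (if x = y then 2 else 0) * (if i = k then 1 else 0)"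
proof -
  have car: "A x \<in> carrier_mat d d" "A y \<in> carrier_mat d d"
    using A xy by (auto simp: clifford_family_def hermitian_mat_def)
  have "(A x * A y + A y * A x) $$ (i,k) = ((if x = y then 2 else 0) \<cdot>\<^sub>m 1\<^sub>m d) $$ (i,k)"
    using A xy by (simp add: clifford_family_def)
  then show ?thesis
    using car ik by (simp add: scalar_prod_def atLeast0LessThan)
qed

lemma clifford_family_involution:
  assumes A: "clifford_family d S A" and x: "x \<in> S"
  shows "involution_mat d (A x)"
  unfolding involution_mat_iff_entries
proof (intro conjI allI impI)
  show "A x \<in> carrier_mat d d" "\<And>i j. i < d \<Longrightarrow> j < d \<Longrightarrow> cnj (A x$$(j,i)) = A x$$(i,j)"
    using A x by (simp_all add: clifford_family_def hermitian_mat_iff_entries)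
  fix i k assume "i < d" "k < d"
  then have "(\<Sum>m<d. A x$$(i,m) * A x$$(m,k)) + (\<Sum>m<d. A x$$(i,m) * A x$$(m,k))
      = 2 * (if i = k then 1 else 0)"
    using clifford_family_anticommutator_entry[OF A x x] by simp
  then show "(\<Sum>m<d. A x$$(i,m) * A x$$(m,k)) = (if i = k then 1 else 0)"
    by (simp add: mult_2[symmetric])
qed

definition lincomb_mat :: "nat \<Rightarrow> 'i set \<Rightarrow> ('i \<Rightarrow> real) \<Rightarrow> ('i \<Rightarrow> complex mat) \<Rightarrow> complex mat" where
  "lincomb_mat d S c A = mat d d (\<lambda>(i,k). \<Sum>x\<in>S. complex_of_real (c x) * A x$$(i,k))"

lemma sum_sum_symmetrize:
  fixes f :: "'a \<Rightarrow> 'a \<Rightarrow> 'b::comm_ring_1"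
  shows "2 * (\<Sum>x\<in>S. \<Sum>y\<in>S. f x y) = (\<Sum>x\<in>S. \<Sum>y\<in>S. f x y + f y x)"
proof -
  have "(\<Sum>x\<in>S. \<Sum>y\<in>S. f y x) = (\<Sum>x\<in>S. \<Sum>y\<in>S. f x y)"
    by (rule sum.swap)
  then show ?thesis by (simp only: mult_2 sum.distrib)
qed

lemma lincomb_mat_square_entry:
  assumes "i < d" "k < d"
  shows "(\<Sum>m<d. lincomb_mat d S c A $$ (i,m) * lincomb_mat d S c A $$ (m,k))
    = (\<Sum>x\<in>S. \<Sum>y\<in>S. complex_of_real (c x * c y) * (\<Sum>m<d. A x$$(i,m) * A y$$(m,k)))"
proof -
  have "(\<Sum>m<d. lincomb_mat d S c A $$ (i,m) * lincomb_mat d S c A $$ (m,k)) = (\<Sum>m<d. \<Sum>x\<in>S. \<Sum>y\<in>S.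
      complex_of_real (c x) * A x$$(i,m) * (complex_of_real (c y) * A y$$(m,k)))"
    using assms by (simp add: lincomb_mat_def sum_product)
  also have "\<dots> = (\<Sum>x\<in>S. \<Sum>y\<in>S. \<Sum>m<d.
      complex_of_real (c x) * A x$$(i,m) * (complex_of_real (c y) * A y$$(m,k)))"
    by (rule sum_triple_swap)
  also have "\<dots> = (\<Sum>x\<in>S. \<Sum>y\<in>S. complex_of_real (c x * c y) * (\<Sum>m<d. A x$$(i,m) * A y$$(m,k)))"
    unfolding sum_distrib_left by (intro sum.cong refl) (simp add: algebra_simps)
  finally show ?thesis .
qed

lemma involution_mat_lincomb:
  assumes A: "clifford_family d S A" and c: "(\<Sum>x\<in>S. (c x)^2) = 1"
  shows "involution_mat d (lincomb_mat d S c A)"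
  unfolding involution_mat_iff_entries
proof (intro conjI allI impI)
  let ?B = "lincomb_mat d S c A"
  show "?B \<in> carrier_mat d d" by (simp add: lincomb_mat_def)
  show "\<And>i j. i < d \<Longrightarrow> j < d \<Longrightarrow> cnj (?B$$(j,i)) = ?B$$(i,j)"
    using A by (simp add: lincomb_mat_def clifford_family_def hermitian_mat_iff_entries)
  have finite: "finite S"
    using c by (metis sum.infinite zero_neq_one)
  fix i k assume ik: "i < d" "k < d"
  define G where "G x y = complex_of_real (c x * c y) * (\<Sum>m<d. A x$$(i,m) * A y$$(m,k))" for x y
  have "2 * (\<Sum>m<d. ?B$$(i,m) * ?B$$(m,k)) = 2 * (\<Sum>x\<in>S. \<Sum>y\<in>S. G x y)"
    unfolding G_def lincomb_mat_square_entry[OF ik] ..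
  also have "\<dots> = (\<Sum>x\<in>S. \<Sum>y\<in>S. G x y + G y x)"
    by (rule sum_sum_symmetrize)
  also have "\<dots> = (\<Sum>x\<in>S. \<Sum>y\<in>S. if y = x then 2 * complex_of_real ((c x)^2) * (if i = k then 1 else 0) else 0)"
  proof (intro sum.cong refl)
    fix x y assume xy: "x \<in> S" "y \<in> S"
    have "G x y + G y x = complex_of_real (c x * c y)
        * ((\<Sum>m<d. A x$$(i,m) * A y$$(m,k)) + (\<Sum>m<d. A y$$(i,m) * A x$$(m,k)))"
      unfolding G_def by (simp add: algebra_simps)
    also have "\<dots> = complex_of_real (c x * c y) * ((if x = y then 2 else 0) * (if i = k then 1 else 0))"
      unfolding clifford_family_anticommutator_entry[OF A xy ik] ..
    finally show "G x y + G y x = (if y = x then 2 * complex_of_real ((c x)^2) * (if i = k then 1 else 0) else 0)"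
      by (auto simp: power2_eq_square)
  qed
  also have "\<dots> = 2 * complex_of_real (\<Sum>x\<in>S. (c x)^2) * (if i = k then 1 else 0)"
    using finite by (simp add: sum_distrib_left sum_distrib_right)
  finally show "(\<Sum>m<d. ?B$$(i,m) * ?B$$(m,k)) = (if i = k then 1 else 0)"
    unfolding c by simp
qed

lemma trace_mult_lincomb:
  "trace_mult d (lincomb_mat d S c A) R = (\<Sum>x\<in>S. complex_of_real (c x) * trace_mult d (A x) R)"
proof -
  have "trace_mult d (lincomb_mat d S c A) R
     = (\<Sum>i<d. \<Sum>k<d. \<Sum>x\<in>S. complex_of_real (c x) * A x$$(i,k) * R$$(k,i))"
    unfolding trace_mult_def lincomb_mat_def by (intro sum.cong refl) (simp add: sum_distrib_right)
  also have "\<dots> = (\<Sum>x\<in>S. complex_of_real (c x) * trace_mult d (A x) R)"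
    unfolding trace_mult_def by (subst sum_triple_swap[symmetric]) (simp add: sum_distrib_left mult.assoc)
  finally show ?thesis .
qed

text \<open>Choose B = (\<Sum>x. sign(tr(A x \<rho>)) A x) / sqrt |S|, an involution with |tr(B \<rho>)| \<le> 1.\<close>
lemma clifford_density_correlations_le:
  assumes A: "clifford_family d S A" and S: "finite S" "S \<noteq> {}" and \<rho>: "density_mat d \<rho>"
  shows "(\<Sum>x\<in>S. cmod (trace_mult d (A x) \<rho>)) \<le> sqrt (card S)"
proof -
  have psd: "psd_mat d \<rho>" and tr1: "mtrace \<rho> = 1" using \<rho> by (auto simp: density_mat_def)
  define t where "t x = Re (trace_mult d (A x) \<rho>)" for x
  have real: "trace_mult d (A x) \<rho> = complex_of_real (t x)" if "x \<in> S" for x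
    using trace_mult_involution_le_mtrace(1)[OF psd clifford_family_involution[OF A that]]
    by (simp add: t_def complex_eq_iff)
  define c where "c x = (if t x \<ge> 0 then 1 else -1) / sqrt (card S)" for x
  have card: "sqrt (card S) > 0" using S by (simp add: card_gt_0_iff)
  have "(\<Sum>x\<in>S. (c x)^2) = (\<Sum>x\<in>S. 1 / card S)"
    by (intro sum.cong refl) (auto simp: c_def power_divide)
  also have "\<dots> = 1" using S by simp
  finally have unit: "(\<Sum>x\<in>S. (c x)^2) = 1" .
  have "trace_mult d (lincomb_mat d S c A) \<rho> = (\<Sum>x\<in>S. complex_of_real (c x * t x))"
    unfolding trace_mult_lincomb using real by (intro sum.cong refl) auto
  also have "\<dots> = complex_of_real ((\<Sum>x\<in>S. \<bar>t x\<bar>) / sqrt (card S))"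
    by (simp add: sum_divide_distrib c_def) (intro sum.cong refl, auto)
  finally have "cmod (trace_mult d (lincomb_mat d S c A) \<rho>) = (\<Sum>x\<in>S. \<bar>t x\<bar>) / sqrt (card S)"
    by (simp only: norm_of_real) (simp add: sum_nonneg)
  then have "(\<Sum>x\<in>S. \<bar>t x\<bar>) / sqrt (card S) \<le> 1"
    using trace_mult_involution_le_mtrace(3)[OF psd involution_mat_lincomb[OF A unit]] tr1 by simp
  moreover have "(\<Sum>x\<in>S. cmod (trace_mult d (A x) \<rho>)) = (\<Sum>x\<in>S. \<bar>t x\<bar>)"
    using real by (intro sum.cong) simp_all
  ultimately show ?thesis
    using card by (simp add: pos_divide_le_eq)
qed

lemma mtrace_msum: "mtrace (msum d f S) = (\<Sum>l\<in>S. \<Sum>i<d. f l $$ (i,i))"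
  unfolding mtrace_def msum_def by (simp, rule sum.swap)

lemma trace_mult_msum: "trace_mult d M (msum d f S) = (\<Sum>l\<in>S. trace_mult d M (f l))"
proof -
  have "trace_mult d M (msum d f S) = (\<Sum>i<d. \<Sum>k<d. \<Sum>l\<in>S. M$$(i,k) * f l $$(k,i))"
    unfolding trace_mult_def msum_def by (intro sum.cong refl) (simp add: sum_distrib_left)
  also have "\<dots> = (\<Sum>l\<in>S. \<Sum>i<d. \<Sum>k<d. M$$(i,k) * f l $$(k,i))"
    by (rule sum_triple_swap[symmetric])
  finally show ?thesis unfolding trace_mult_def .
qed

lemma trace_mult_smult: "X \<in> carrier_mat d d \<Longrightarrow> trace_mult d M (a \<cdot>\<^sub>m X) = a * trace_mult d M X"
  unfolding trace_mult_def by (simp add: sum_distrib_left algebra_simps)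

lemma assemblage_psd_mat:
  "assemblage n d sig \<Longrightarrow> x \<in> {1..n} \<Longrightarrow> a \<in> {1,2} \<Longrightarrow> psd_mat d (sig x a)"
  unfolding assemblage_def by blast

lemma assemblage_carrier:
  "assemblage n d sig \<Longrightarrow> x \<in> {1..n} \<Longrightarrow> a \<in> {1,2} \<Longrightarrow> sig x a \<in> carrier_mat d d"
  using assemblage_psd_mat unfolding psd_mat_def hermitian_mat_def by blast

lemma assemblage_mtrace:
  assumes sig: "assemblage n d sig" and x: "x \<in> {1..n}"
  shows "mtrace (sig x 1) + mtrace (sig x 2) = 1"
proof -
  have "mtrace (sig x 1 + sig x 2) = 1" using sig x unfolding assemblage_def by blast
  then show ?thesis
    using assemblage_carrier[OF sig x, of 1] assemblage_carrier[OF sig x, of 2]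
    by (simp add: mtrace_def sum.distrib)
qed

lemma dicho_pairing_eq_sum_trace_mult:
  assumes A: "\<And>x. x \<in> {1..n} \<Longrightarrow> A x \<in> carrier_mat (2^n) (2^n)"
    and sig: "\<And>x a. x \<in> {1..n} \<Longrightarrow> a \<in> {1,2} \<Longrightarrow> sig x a \<in> carrier_mat (2^n) (2^n)"
  shows "dicho_pairing n A sig
    = (\<Sum>x\<in>{1..n}. trace_mult (2^n) (A x) (sig x 1) - trace_mult (2^n) (A x) (sig x 2))"
  unfolding dicho_pairing_def mtrace_msum
proof (intro sum.cong refl)
  fix x assume x: "x \<in> {1..n}"
  show "(\<Sum>i<2^n. (A x * (sig x 1 - sig x 2)) $$ (i,i))
      = trace_mult (2^n) (A x) (sig x 1) - trace_mult (2^n) (A x) (sig x 2)"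
    unfolding trace_mult_def sum_subtractf[symmetric]
    using A[OF x] sig[OF x, of 1] sig[OF x, of 2] by (intro sum.cong refl)
      (simp add: scalar_prod_def atLeast0LessThan right_diff_distrib sum_subtractf)
qed

lemma dicho_pairing_le_quantum:
  assumes A: "clifford_family (2^n) {1..n} A" and sig: "assemblage n (2^n) sig"
  shows "cmod (dicho_pairing n A sig) \<le> n"
proof -
  let ?d = "2^n :: nat"
  have A_car: "A x \<in> carrier_mat ?d ?d" if "x \<in> {1..n}" for x
    using clifford_family_involution[OF A that] by (simp add: involution_mat_iff_entries)
  have term_le: "cmod (trace_mult ?d (A x) (sig x a)) \<le> Re (mtrace (sig x a))"
    if "x \<in> {1..n}" "a \<in> {1,2}" for x a
    using assemblage_psd_mat[OF sig that] clifford_family_involution[OF A that(1)]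
    by (rule trace_mult_involution_le_mtrace(3))
  have "dicho_pairing n A sig
      = (\<Sum>x\<in>{1..n}. trace_mult ?d (A x) (sig x 1) - trace_mult ?d (A x) (sig x 2))"
    using A_car assemblage_carrier[OF sig] by (rule dicho_pairing_eq_sum_trace_mult)
  then have "cmod (dicho_pairing n A sig)
      \<le> (\<Sum>x\<in>{1..n}. cmod (trace_mult ?d (A x) (sig x 1) - trace_mult ?d (A x) (sig x 2)))"
    by (simp add: norm_sum)
  also have "\<dots> \<le> (\<Sum>x\<in>{1..n}. 1)"
  proof (rule sum_mono)
    fix x assume x: "x \<in> {1..n}"
    have "cmod (trace_mult ?d (A x) (sig x 1) - trace_mult ?d (A x) (sig x 2))
        \<le> Re (mtrace (sig x 1)) + Re (mtrace (sig x 2))"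
      using term_le[OF x] by (intro order_trans[OF norm_triangle_ineq4] add_mono) auto
    also have "\<dots> = 1"
      using assemblage_mtrace[OF sig x] by (metis one_complex.sel plus_complex.sel(1))
    finally show "cmod (trace_mult ?d (A x) (sig x 1) - trace_mult ?d (A x) (sig x 2)) \<le> 1" .
  qed
  finally show ?thesis by simp
qed

lemma assemblages_L_obtain:
  assumes "sig \<in> assemblages_L n d"
  obtains \<Lambda> :: "nat set" and q \<rho> p where "\<forall>l\<in>\<Lambda>. 0 \<le> q l" "(\<Sum>l\<in>\<Lambda>. q l) = 1"
    "\<forall>l\<in>\<Lambda>. density_mat d (\<rho> l)"
    "\<forall>l\<in>\<Lambda>. \<forall>x\<in>{1..n}. (\<forall>a\<in>{1,2::nat}. 0 \<le> p l a x) \<and> p l 1 x + p l 2 x = 1"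
    "\<forall>x\<in>{1..n}. \<forall>a\<in>{1,2::nat}. sig x a = msum d (\<lambda>l. complex_of_real (q l * p l a x) \<cdot>\<^sub>m \<rho> l) \<Lambda>"
  using assms unfolding assemblages_L_def by blast

lemma norm_response_weighted_le:
  assumes "0 \<le> q" "0 \<le> p1" "0 \<le> p2" "p1 + p2 = 1"
  shows "cmod (complex_of_real (q * (p1 - p2)) * z) \<le> q * cmod z"
proof -
  have "q * (\<bar>p1 - p2\<bar> * cmod z) \<le> q * (1 * cmod z)"
    using assms by (intro mult_left_mono mult_right_mono) auto
  then have "q * \<bar>p1 - p2\<bar> * cmod z \<le> q * cmod z"
    by (simp add: mult.assoc)
  then show ?thesis
    using assms(1) by (simp only: norm_mult norm_of_real abs_mult abs_of_nonneg)
qed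

lemma dicho_pairing_le_lhs:
  assumes A: "clifford_family (2^n) {1..n} A" and n: "n \<ge> 1" and sig: "sig \<in> assemblages_L n (2^n)"
  shows "cmod (dicho_pairing n A sig) \<le> sqrt n"
proof -
  let ?d = "2^n :: nat"
  obtain \<Lambda> :: "nat set" and q \<rho> p where q0: "\<forall>l\<in>\<Lambda>. 0 \<le> q l" and q1: "(\<Sum>l\<in>\<Lambda>. q l) = 1"
    and dens: "\<forall>l\<in>\<Lambda>. density_mat ?d (\<rho> l)"
    and p: "\<forall>l\<in>\<Lambda>. \<forall>x\<in>{1..n}. (\<forall>a\<in>{1,2::nat}. 0 \<le> p l a x) \<and> p l 1 x + p l 2 x = 1"
    and rep: "\<forall>x\<in>{1..n}. \<forall>a\<in>{1,2::nat}.
      sig x a = msum ?d (\<lambda>l. complex_of_real (q l * p l a x) \<cdot>\<^sub>m \<rho> l) \<Lambda>"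
    by (rule assemblages_L_obtain[OF sig])
  have asm: "assemblage n ?d sig" using sig unfolding assemblages_L_def by blast
  define t where "t l x = trace_mult ?d (A x) (\<rho> l)" for l x
  have A_car: "A x \<in> carrier_mat ?d ?d" if "x \<in> {1..n}" for x
    using clifford_family_involution[OF A that] by (simp add: involution_mat_iff_entries)
  have \<rho>_car: "\<rho> l \<in> carrier_mat ?d ?d" if "l \<in> \<Lambda>" for l
    using dens that by (simp add: density_mat_def psd_mat_def hermitian_mat_def)
  have trace_sig: "trace_mult ?d (A x) (sig x a) = (\<Sum>l\<in>\<Lambda>. complex_of_real (q l * p l a x) * t l x)"
    if "x \<in> {1..n}" "a \<in> {1,2}" for x a
    unfolding rep[rule_format, OF that] trace_mult_msum t_def
    by (intro sum.cong refl) (simp add: trace_mult_smult \<rho>_car)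
  have "dicho_pairing n A sig = (\<Sum>x\<in>{1..n}. trace_mult ?d (A x) (sig x 1) - trace_mult ?d (A x) (sig x 2))"
    using A_car assemblage_carrier[OF asm] by (rule dicho_pairing_eq_sum_trace_mult)
  also have "\<dots> = (\<Sum>x\<in>{1..n}. \<Sum>l\<in>\<Lambda>. complex_of_real (q l * (p l 1 x - p l 2 x)) * t l x)"
    by (intro sum.cong refl) (simp add: trace_sig sum_subtractf[symmetric] algebra_simps)
  finally have "cmod (dicho_pairing n A sig)
      \<le> (\<Sum>x\<in>{1..n}. \<Sum>l\<in>\<Lambda>. cmod (complex_of_real (q l * (p l 1 x - p l 2 x)) * t l x))"
    by (simp only:) (intro order_trans[OF norm_sum] sum_mono norm_sum)
  also have "\<dots> \<le> (\<Sum>x\<in>{1..n}. \<Sum>l\<in>\<Lambda>. q l * cmod (t l x))"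
    using q0 p by (intro sum_mono norm_response_weighted_le) auto
  also have "\<dots> = (\<Sum>l\<in>\<Lambda>. q l * (\<Sum>x\<in>{1..n}. cmod (t l x)))"
    by (subst sum.swap) (simp add: sum_distrib_left)
  also have "\<dots> \<le> (\<Sum>l\<in>\<Lambda>. q l * sqrt n)"
    using q0 dens n unfolding t_def
    by (intro sum_mono mult_left_mono) (auto intro: clifford_density_correlations_le[OF A, simplified])
  also have "\<dots> = sqrt n" using q1 by (simp add: sum_distrib_right[symmetric])
  finally show ?thesis .
qed

definition affine_mat :: "nat \<Rightarrow> real \<Rightarrow> real \<Rightarrow> complex mat \<Rightarrow> complex mat" where
  "affine_mat d c s B = complex_of_real c \<cdot>\<^sub>m (1\<^sub>m d + complex_of_real s \<cdot>\<^sub>m B)"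

lemma affine_mat_carrier: "B \<in> carrier_mat d d \<Longrightarrow> affine_mat d c s B \<in> carrier_mat d d"
  unfolding affine_mat_def by simp

lemma affine_mat_index:
  "B \<in> carrier_mat d d \<Longrightarrow> i < d \<Longrightarrow> k < d \<Longrightarrow>
   affine_mat d c s B $$ (i,k) = complex_of_real c * ((if i = k then 1 else 0) + complex_of_real s * B$$(i,k))"
  unfolding affine_mat_def by simp

lemma mtrace_affine_mat:
  "B \<in> carrier_mat d d \<Longrightarrow> mtrace (affine_mat d c s B) = complex_of_real c * (of_nat d + complex_of_real s * mtrace B)"
  unfolding mtrace_def affine_mat_def by (simp add: sum.distrib sum_distrib_left algebra_simps)

lemma trace_mult_affine_mat:
  assumes "involution_mat d B"
  shows "trace_mult d B (affine_mat d c s B) = complex_of_real c * (mtrace B + complex_of_real s * of_nat d)"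
proof -
  have B: "B \<in> carrier_mat d d"
    and sq: "\<forall>i<d. \<forall>k<d. (\<Sum>m<d. B$$(i,m) * B$$(m,k)) = (if i = k then 1 else 0)"
    using assms by (simp_all add: involution_mat_iff_entries)
  have "trace_mult d B (affine_mat d c s B) = (\<Sum>i<d. \<Sum>k<d. complex_of_real c * (if i = k then B$$(i,i) else 0)
      + complex_of_real c * complex_of_real s * (B$$(i,k) * B$$(k,i)))"
    unfolding trace_mult_def by (intro sum.cong refl) (auto simp: affine_mat_index[OF B] algebra_simps)
  also have "\<dots> = complex_of_real c * ((\<Sum>i<d. B$$(i,i)) + complex_of_real s * (\<Sum>i<d. \<Sum>k<d. B$$(i,k) * B$$(k,i)))"
    by (simp add: sum.distrib sum_distrib_left[symmetric] algebra_simps)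
  also have "(\<Sum>i<d. \<Sum>k<d. B$$(i,k) * B$$(k,i)) = (\<Sum>i<d. 1)"
    using sq by (intro sum.cong refl) auto
  finally show ?thesis using B by (simp add: mtrace_def)
qed

lemma psd_mat_rank_one:
  assumes "v \<in> carrier_vec d"
  shows "psd_mat d (mat d d (\<lambda>(k,j). v$k * cnj (v$j)))"
  unfolding psd_mat_iff_quad_form hermitian_mat_iff_entries
proof (intro conjI ballI allI impI)
  fix w :: "complex vec"
  define z where "z = (\<Sum>j<d. cnj (w$j) * v$j)"
  have "quad_form d (mat d d (\<lambda>(k,j). v$k * cnj (v$j))) w = complex_of_real ((Re z)\<^sup>2 + (Im z)\<^sup>2)"
    unfolding quad_form_def complex_mult_cnj[symmetric] z_def by (simp add: sum_product algebra_simps)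
  then show "Im (quad_form d (mat d d (\<lambda>(k,j). v$k * cnj (v$j))) w) = 0"
    "0 \<le> Re (quad_form d (mat d d (\<lambda>(k,j). v$k * cnj (v$j))) w)"
    by simp_all
qed simp_all

text \<open>Testing the trace bound on the rank-one matrix v v^* gives |v^* B v| \<le> |v|^2.\<close>
lemma psd_mat_affine_mat:
  assumes B: "involution_mat d B" and c: "0 \<le> c" and s: "\<bar>s\<bar> \<le> 1"
  shows "psd_mat d (affine_mat d c s B)"
  unfolding psd_mat_iff_quad_form hermitian_mat_iff_entries
proof (intro conjI ballI allI impI)
  have B_car: "B \<in> carrier_mat d d" and herm: "\<forall>i<d. \<forall>j<d. cnj (B$$(j,i)) = B$$(i,j)"
    using B by (simp_all add: involution_mat_iff_entries)
  show "affine_mat d c s B \<in> carrier_mat d d" using B_car by (rule affine_mat_carrier)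
  show "\<And>i j. i < d \<Longrightarrow> j < d \<Longrightarrow> cnj (affine_mat d c s B $$ (j,i)) = affine_mat d c s B $$ (i,j)"
    using herm by (auto simp: affine_mat_index[OF B_car])
  fix v :: "complex vec" assume v: "v \<in> carrier_vec d"
  define X where "X = mat d d (\<lambda>(k,j). v$k * cnj (v$j))"
  have "trace_mult d B X = quad_form d B v"
    unfolding trace_mult_def quad_form_def X_def by (simp add: algebra_simps)
  moreover have "mtrace X = (\<Sum>j<d. cnj (v$j) * v$j)"
    unfolding mtrace_def X_def by (simp add: mult.commute)
  ultimately have q_real: "Im (quad_form d B v) = 0" and norm2_real: "Im (\<Sum>j<d. cnj (v$j) * v$j) = 0"
    and q_le: "cmod (quad_form d B v) \<le> Re (\<Sum>j<d. cnj (v$j) * v$j)"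
    using trace_mult_involution_le_mtrace[OF psd_mat_rank_one[OF v] B] by (simp_all add: X_def)
  have "quad_form d (affine_mat d c s B) v = (\<Sum>j<d. \<Sum>k<d. complex_of_real c * (if j = k then cnj (v$j) * v$j else 0)
      + complex_of_real c * complex_of_real s * (cnj (v$j) * B$$(j,k) * v$k))"
    unfolding quad_form_def by (intro sum.cong refl) (auto simp: affine_mat_index[OF B_car] algebra_simps)
  also have "\<dots> = complex_of_real c * ((\<Sum>j<d. cnj (v$j) * v$j) + complex_of_real s * quad_form d B v)"
    unfolding quad_form_def by (simp add: sum.distrib sum_distrib_left[symmetric] algebra_simps)
  finally have "quad_form d (affine_mat d c s B) v
      = complex_of_real c * ((\<Sum>j<d. cnj (v$j) * v$j) + complex_of_real s * quad_form d B v)" .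
  moreover have "\<bar>s * Re (quad_form d B v)\<bar> \<le> \<bar>Re (quad_form d B v)\<bar>"
    using s by (simp add: abs_mult mult_left_le_one_le)
  moreover note abs_Re_le_cmod[of "quad_form d B v"]
  ultimately show "Im (quad_form d (affine_mat d c s B) v) = 0"
    "0 \<le> Re (quad_form d (affine_mat d c s B) v)"
    using q_real norm2_real q_le c by auto
qed

lemma psd_mat_smult:
  assumes M: "psd_mat d M" and a: "0 \<le> a"
  shows "psd_mat d (complex_of_real a \<cdot>\<^sub>m M)"
proof -
  have "quad_form d (complex_of_real a \<cdot>\<^sub>m M) v = complex_of_real a * quad_form d M v"
    if "v \<in> carrier_vec d" for v
    using M unfolding quad_form_def psd_mat_def hermitian_mat_def
    by (auto simp: sum_distrib_left algebra_simps intro!: sum.cong)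
  then show ?thesis
    using M a by (auto simp: psd_mat_iff_quad_form hermitian_mat_iff_entries)
qed

lemma single_state_in_assemblages_L:
  assumes \<rho>: "density_mat d \<rho>"
    and p: "\<And>x. x \<in> {1..n} \<Longrightarrow> 0 \<le> p 1 x \<and> 0 \<le> p 2 x \<and> p 1 x + p 2 x = 1"
  shows "(\<lambda>x a. complex_of_real (p a x) \<cdot>\<^sub>m \<rho>) \<in> assemblages_L n d"
proof -
  have \<rho>_car: "\<rho> \<in> carrier_mat d d"
    using \<rho> by (simp add: density_mat_def psd_mat_def hermitian_mat_def)
  have sum: "complex_of_real (p 1 x) \<cdot>\<^sub>m \<rho> + complex_of_real (p 2 x) \<cdot>\<^sub>m \<rho> = \<rho>" if "x \<in> {1..n}" for x
  proof -
    have "complex_of_real (p 1 x) \<cdot>\<^sub>m \<rho> + complex_of_real (p 2 x) \<cdot>\<^sub>m \<rho>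
        = complex_of_real (p 1 x + p 2 x) \<cdot>\<^sub>m \<rho>"
      using \<rho>_car by (simp add: add_smult_distrib_right_mat)
    also have "\<dots> = \<rho>" by (rule eq_matI) (use p[OF that] \<rho>_car in auto)
    finally show ?thesis .
  qed
  have "assemblage n d (\<lambda>x a. complex_of_real (p a x) \<cdot>\<^sub>m \<rho>)"
    unfolding assemblage_def
    using \<rho> p sum by (auto intro!: psd_mat_smult simp: density_mat_def)
  moreover have "msum d (\<lambda>l. complex_of_real (1 * p a x) \<cdot>\<^sub>m \<rho>) {0::nat}
      = complex_of_real (p a x) \<cdot>\<^sub>m \<rho>" for x a
    unfolding msum_def using \<rho>_car by (auto intro!: eq_matI)
  ultimately show ?thesis
    unfolding assemblages_L_def using \<rho> p
    by (intro CollectI conjI exI[of _ "{0::nat}"] exI[of _ "\<lambda>_. 1::real"] exI[of _ "\<lambda>_. \<rho>"]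
        exI[of _ "\<lambda>_ a x. p a x"]) auto
qed

lemma dicho_pairing_single_state:
  assumes A: "\<And>x. x \<in> {1..n} \<Longrightarrow> A x \<in> carrier_mat (2^n) (2^n)" and \<rho>: "\<rho> \<in> carrier_mat (2^n) (2^n)"
  shows "dicho_pairing n A (\<lambda>x a. complex_of_real (p a x) \<cdot>\<^sub>m \<rho>)
    = (\<Sum>x\<in>{1..n}. complex_of_real (p 1 x - p 2 x) * trace_mult (2^n) (A x) \<rho>)"
  using A \<rho> by (subst dicho_pairing_eq_sum_trace_mult) (auto simp: trace_mult_smult algebra_simps)

text \<open>With s the sign of tr B, the state (1 + s B) / (d + |tr B|) has tr(B \<rho>) = s.\<close>
lemma involution_density_witness:
  assumes B: "involution_mat d B" and d: "0 < d"
  obtains \<rho> where "density_mat d \<rho>" "cmod (trace_mult d B \<rho>) = 1"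
proof -
  have B_car: "B \<in> carrier_mat d d" using B by (simp add: involution_mat_iff_entries)
  define r where "r = Re (mtrace B)"
  have "cnj (B$$(i,i)) = B$$(i,i)" if "i < d" for i
    using B that by (simp add: involution_mat_iff_entries)
  then have "Im (B$$(i,i)) = 0" if "i < d" for i
    using that by (simp add: complex_eq_iff)
  then have tr: "mtrace B = complex_of_real r"
    using B_car by (simp add: r_def complex_eq_iff mtrace_def Im_sum)
  define s :: real where "s = (if 0 \<le> r then 1 else -1)"
  define c :: real where "c = 1 / (d + \<bar>r\<bar>)"
  have sr: "s * r = \<bar>r\<bar>" and s_abs: "\<bar>s\<bar> \<le> 1" by (simp_all add: s_def)
  have pos: "0 < real d + \<bar>r\<bar>" using d by simp
  show ?thesis
  proof
    have "mtrace (affine_mat d c s B) = complex_of_real (c * (d + s * r))"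
      unfolding mtrace_affine_mat[OF B_car] tr by simp
    then have "mtrace (affine_mat d c s B) = 1"
      unfolding sr c_def using pos by simp
    then show "density_mat d (affine_mat d c s B)"
      unfolding density_mat_def using psd_mat_affine_mat[OF B _ s_abs] pos by (simp add: c_def)
    have "r + s * d = s * (d + \<bar>r\<bar>)"
      unfolding s_def by auto
    then have val: "c * (r + s * d) = s"
      using pos unfolding c_def by simp
    have "trace_mult d B (affine_mat d c s B) = complex_of_real (c * (r + s * d))"
      unfolding trace_mult_affine_mat[OF B] tr by simp
    also have "\<dots> = complex_of_real s" by (simp only: val)
    finally show "cmod (trace_mult d B (affine_mat d c s B)) = 1" by (simp add: s_def)
  qed
qed

lemma lhs_witness:
  assumes A: "clifford_family (2^n) {1..n} A" and n: "1 \<le> n"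
  obtains sig where "sig \<in> assemblages_L n (2^n)" "cmod (dicho_pairing n A sig) = 1"
proof -
  let ?d = "2^n :: nat"
  have one: "1 \<in> {1..n}" using n by simp
  obtain \<rho> where \<rho>: "density_mat ?d \<rho>" and val: "cmod (trace_mult ?d (A 1) \<rho>) = 1"
    using involution_density_witness[OF clifford_family_involution[OF A one]] by auto
  txt \<open>Deterministic at x = 1 and unbiased elsewhere, so only the x = 1 term of the pairing survives.\<close>
  define p :: "nat \<Rightarrow> nat \<Rightarrow> real" where
    "p a x = (if x = 1 then (if a = 1 then 1 else 0) else 1/2)" for a x
  have A_car: "A x \<in> carrier_mat ?d ?d" if "x \<in> {1..n}" for x
    using clifford_family_involution[OF A that] by (simp add: involution_mat_iff_entries)
  have \<rho>_car: "\<rho> \<in> carrier_mat ?d ?d"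
    using \<rho> by (simp add: density_mat_def psd_mat_def hermitian_mat_def)
  show ?thesis
  proof
    show "(\<lambda>x a. complex_of_real (p a x) \<cdot>\<^sub>m \<rho>) \<in> assemblages_L n ?d"
      using \<rho> by (rule single_state_in_assemblages_L) (simp add: p_def)
    have "dicho_pairing n A (\<lambda>x a. complex_of_real (p a x) \<cdot>\<^sub>m \<rho>)
        = (\<Sum>x\<in>{1..n}. complex_of_real (p 1 x - p 2 x) * trace_mult ?d (A x) \<rho>)"
      by (rule dicho_pairing_single_state[OF A_car \<rho>_car])
    also have "\<dots> = (\<Sum>x\<in>{1..n}. if x = 1 then trace_mult ?d (A 1) \<rho> else 0)"
      by (intro sum.cong refl) (simp add: p_def)
    also have "\<dots> = trace_mult ?d (A 1) \<rho>" using one by simp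
    finally show "cmod (dicho_pairing n A (\<lambda>x a. complex_of_real (p a x) \<cdot>\<^sub>m \<rho>)) = 1"
      using val by simp
  qed
qed

lemma affine_mat_plus_neg:
  "B \<in> carrier_mat d d \<Longrightarrow> affine_mat d c s B + affine_mat d c (-s) B = complex_of_real (2 * c) \<cdot>\<^sub>m 1\<^sub>m d"
  unfolding affine_mat_def by (rule eq_matI) (auto simp: algebra_simps)

lemma quantum_witness:
  assumes A: "clifford_family (2^n) {1..n} A"
  obtains sig where "sig \<in> assemblages_Q n (2^n)" "cmod (dicho_pairing n A sig) = n"
proof
  let ?d = "2^n :: nat"
  let ?c = "1 / (2 * 2^n) :: real"
  define sig where "sig x (a :: nat) = affine_mat ?d ?c (if a = 1 then 1 else -1) (A x)" for x a
  have B: "involution_mat ?d (A x)" if "x \<in> {1..n}" for x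
    using clifford_family_involution[OF A that] .
  then have A_car: "A x \<in> carrier_mat ?d ?d" if "x \<in> {1..n}" for x
    using that by (simp add: involution_mat_iff_entries)
  have sum: "sig x 1 + sig x 2 = complex_of_real (1 / 2^n) \<cdot>\<^sub>m 1\<^sub>m ?d" if "x \<in> {1..n}" for x
    using affine_mat_plus_neg[OF A_car[OF that], of ?c 1] by (simp add: sig_def)
  show "sig \<in> assemblages_Q n ?d"
    unfolding assemblages_Q_def assemblage_def mem_Collect_eq
  proof (intro conjI ballI)
    fix x a assume "x \<in> {1..n}" "a \<in> {1,2::nat}"
    then show "psd_mat ?d (sig x a)"
      unfolding sig_def by (intro psd_mat_affine_mat B) auto
  next
    fix x y assume "x \<in> {1..n}" "y \<in> {1..n}"
    then show "sig x 1 + sig x 2 = sig y 1 + sig y 2" by (simp only: sum)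
  next
    fix x assume "x \<in> {1..n}"
    then show "mtrace (sig x 1 + sig x 2) = 1" unfolding sum[OF \<open>x \<in> {1..n}\<close>] by (simp add: mtrace_def)
  qed
  have "dicho_pairing n A sig = (\<Sum>x\<in>{1..n}. trace_mult ?d (A x) (sig x 1) - trace_mult ?d (A x) (sig x 2))"
    using A_car by (rule dicho_pairing_eq_sum_trace_mult) (auto simp: sig_def affine_mat_carrier A_car)
  also have "\<dots> = (\<Sum>x\<in>{1..n}. 1)"
    by (intro sum.cong refl)
      (simp add: sig_def trace_mult_affine_mat B algebra_simps add_divide_distrib diff_divide_distrib)
  finally show "cmod (dicho_pairing n A sig) = n" by simp
qed

lemma SUP_ratio_ge:
  fixes f g :: "'a \<Rightarrow> real"
  assumes f_bdd: "bdd_above (f ` X)" and x: "x \<in> X" "a \<le> f x" and a: "0 \<le> a"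
    and g_le: "\<And>y. y \<in> Y \<Longrightarrow> g y \<le> b" and y: "y \<in> Y" "0 < g y"
  shows "a / b \<le> (SUP x\<in>X. f x) / (SUP y\<in>Y. g y)"
proof -
  have g_bdd: "bdd_above (g ` Y)" using g_le by (intro bdd_aboveI) auto
  have SUP_g_pos: "0 < (SUP y\<in>Y. g y)"
    using less_le_trans[OF y(2) cSUP_upper[OF y(1) g_bdd]] .
  have SUP_g_le: "(SUP y\<in>Y. g y) \<le> b"
    using g_le y(1) by (intro cSUP_least) auto
  have "a / b \<le> a / (SUP y\<in>Y. g y)"
    using SUP_g_pos SUP_g_le a by (intro divide_left_mono) auto
  also have "\<dots> \<le> (SUP x\<in>X. f x) / (SUP y\<in>Y. g y)"
    using order_trans[OF x(2) cSUP_upper[OF x(1) f_bdd]] SUP_g_pos by (intro divide_right_mono) auto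
  finally show ?thesis .
qed

theorem corollary1:
  fixes n :: nat and A :: "nat \<Rightarrow> complex mat"
  assumes "n \<ge> 1"
    and "\<And>x. x \<in> {1..n} \<Longrightarrow> A x \<in> carrier_mat (2^n) (2^n)"
    and "\<And>x. x \<in> {1..n} \<Longrightarrow> mat_adjoint (A x) = A x"
    and "\<And>x y. x \<in> {1..n} \<Longrightarrow> y \<in> {1..n} \<Longrightarrow>
           A x * A y + A y * A x = (if x = y then 2 else 0) \<cdot>\<^sub>m 1\<^sub>m (2^n)"
  shows "violation_dicho n A \<ge> sqrt (real n / 2)"
proof -
  have A: "clifford_family (2^n) {1..n} A"
    using assms(2-4) by (simp add: clifford_family_def hermitian_mat_def)
  obtain sigQ where sigQ: "sigQ \<in> assemblages_Q n (2^n)" "cmod (dicho_pairing n A sigQ) = n"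
    using quantum_witness[OF A] .
  obtain sigL where sigL: "sigL \<in> assemblages_L n (2^n)" "cmod (dicho_pairing n A sigL) = 1"
    using lhs_witness[OF A assms(1)] .
  have "sqrt (real n / 2) \<le> sqrt n" by simp
  also have "\<dots> = real n / sqrt n" by (simp add: real_div_sqrt)
  also have "\<dots> \<le> violation_dicho n A"
    unfolding violation_dicho_def
  proof (rule SUP_ratio_ge)
    show "bdd_above ((\<lambda>sig. cmod (dicho_pairing n A sig)) ` assemblages_Q n (2^n))"
      using dicho_pairing_le_quantum[OF A] by (intro bdd_aboveI) (auto simp: assemblages_Q_def)
  qed (use sigQ sigL dicho_pairing_le_lhs[OF A assms(1)] in auto)
  finally show ?thesis .
qed

end
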